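(* Let $v^1,\dots,v^k$ be a basis of $\mathfrak h^*$, let $G=(G^{ab})$ with $G^{ab}=(v^a|v^b)$ be the Gram matrix and $(G_{ab})=G^{-1}$ its inverse. For a real root $\alpha=\sum_{a=1}^k\alpha_a v^a$ define the real $k\times k$ matrix $X(\alpha)$ by $$X(\alpha)_{ab}=-\tfrac12\alpha_a\alpha_b+\tfrac14 G_{ab}.$$ Then for all $\alpha,\beta\in\lambda$ the matrices $X(\alpha)$ are symmetric, $X(\alpha)GX(\beta)-X(\beta)GX(\alpha)=0$ if $(\alpha|\beta)=0$, and $X(\alpha)GX(\beta)+X(\beta)GX(\alpha)=\frac12X(\alpha\pm\beta)$ if $(\alpha|\beta)=\mp1$ and $\alpha\pm\beta\in\lambda$. In particular, with $\phi^a_\gamma=v^a\otimes f_\gamma$ in the Clifford algebra $\mathcal S$ defined below and $\widehat J(\alpha_i):=\sum_{a,b=1}^k\sum_{\gamma,\delta=1}^lX(\alpha_i)_{ab}\Gamma(\alpha_i)_{\gamma\delta}\phi^a_\gamma\phi^b_\delta$ (the image of $X(\alpha_i)\otimes\Gamma(\alpha_i)$ in $\mathcal S$), the assignment $X_i\mapsto\widehat J(\alpha_i)$ extends to a Lie algebra homomorphism $\mathfrak k\to(\mathcal S,[\cdot,\cdot])$, i.e. a finite-dimensional representation of $\mathfrak k$.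
   Context: Let $A=(a_{ij})_{1\le i,j\le n}$ be a symmetrizable simply laced generalized Cartan matrix (off-diagonal entries $0$ or $-1$); the Dynkin diagram has an edge between $i\ne j$ iff $a_{ij}=-1$. Let $\mathfrak g$ be the split real Kac–Moody algebra of $A$ with Chevalley generators $e_i,f_i$, Cartan subalgebra $\mathfrak h$ (from a real realization, so $\dim\mathfrak h^*=2n-\mathrm{rk}(A)$), simple roots $\alpha_1,\dots,\alpha_n\in\mathfrak h^*$, real roots $\Delta^{\mathrm{re}}$, and let $(\cdot|\cdot)$ be the nondegenerate invariant symmetric bilinear form induced on $\mathfrak h^*$, with $(\alpha_i|\alpha_j)=a_{ij}$. Let $\mathfrak k$ be the fixed-point subalgebra of the Chevalley involution ($e_i\mapsto -f_i$, $f_i\mapsto-e_i$, $h\mapsto -h$), with Berman generators $X_i=e_i-f_i$; $\mathfrak k$ is presented by generators $X_1,\dots,X_n$ and relations $[X_i,[X_i,X_j]]=-X_j$ if $a_{ij}=-1$, $[X_i,X_j]=0$ if $a_{ij}=0$. Let $\lambda$ be the set of real roots consisting of the simple roots together with all $\alpha_i+\alpha_j$ for $i,j$ forming an edge of the Dynkin diagram. A generalized spin representation is a representation $\rho$ of $\mathfrak k$ with $\rho(X_i)^2=-\frac14\mathrm{id}$. Fix a finite-dimensional real vector space $S$ with positive definite inner product $q_2$ and orthonormal basis $f_1,\dots,f_l$, and a generalized spin representation $\rho:\mathfrak k\to\mathrm{End}(S)$ whose values $\rho(X_i)$ are anti-symmetric real matrices in this basis (such exist, e.g. by realifying the generalized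 spin representations with compact image of Hainke–Köhl–Levy); put $\Gamma(\alpha_i):=2\rho(X_i)$. Let $q$ be the symmetric bilinear form on $\mathfrak h^*\otimes S$ with $q(v^a\otimes f_\gamma,v^b\otimes f_\delta)=G^{ab}\delta_{\gamma\delta}$ and $\mathcal S$ the Clifford algebra: the tensor algebra of $\mathfrak h^*\otimes S$ modulo the ideal generated by $w\otimes w-\frac12q(w,w)\cdot1$ (so $vw+wv=q(v,w)$). *)

theory Defs
  imports "HOL-Analysis.Analysis"
begin

definition simply_laced_symmetrizable_gcm :: "('n::finite \<Rightarrow> 'n \<Rightarrow> int) \<Rightarrow> bool" where
  "simply_laced_symmetrizable_gcm A \<longleftrightarrow>
     (\<forall>i. A i i = 2) \<and>
     (\<forall>i j. i \<noteq> j \<longrightarrow> A i j = 0 \<or> A i j = -1) \<and>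
     (\<forall>i j. A i j = 0 \<longleftrightarrow> A j i = 0) \<and>
     (\<exists>d::'n \<Rightarrow> real. (\<forall>i. d i > 0) \<and> (\<forall>i j. d i * A i j = d j * A j i))"

definition cartan_matrix :: "('n::finite \<Rightarrow> 'n \<Rightarrow> int) \<Rightarrow> real^'n^'n" where
  "cartan_matrix A = (\<chi> i j. real_of_int (A i j))"

definition lam_set :: "('n \<Rightarrow> 'n \<Rightarrow> int) \<Rightarrow> ('n \<Rightarrow> 'h::real_vector) \<Rightarrow> 'h set" where
  "lam_set A al = range al \<union> {al i + al j | i j. A i j = -1}"

definition coord :: "('k::finite \<Rightarrow> 'h::real_vector) \<Rightarrow> 'h \<Rightarrow> 'k \<Rightarrow> real" where
  "coord v x = (THE c. x = (\<Sum>a\<in>UNIV. c a *\<^sub>R v a))"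

definition gram :: "('h \<Rightarrow> 'h \<Rightarrow> real) \<Rightarrow> ('k::finite \<Rightarrow> 'h) \<Rightarrow> real^'k^'k" where
  "gram B v = (\<chi> a b. B (v a) (v b))"

definition Xmat :: "('h \<Rightarrow> 'h \<Rightarrow> real) \<Rightarrow> ('k::finite \<Rightarrow> 'h::real_vector) \<Rightarrow> 'h \<Rightarrow> real^'k^'k" where
  "Xmat B v x = (\<chi> a b. - (1/2) * coord v x a * coord v x b
                        + (1/4) * (matrix_inv (gram B v)) $ a $ b)"

definition comm :: "'b::ring \<Rightarrow> 'b \<Rightarrow> 'b" where
  "comm x y = x * y - y * x"

text \<open>Jhat(alpha_i) = sum_{a,b,gamma,delta} X(alpha_i)_{ab} Gamma(alpha_i)_{gamma delta} phi^a_gamma phi^b_delta,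
  where Gamma(alpha_i) = 2 rho(X_i).\<close>

definition Jhat :: "('h \<Rightarrow> 'h \<Rightarrow> real) \<Rightarrow> ('k::finite \<Rightarrow> 'h::real_vector) \<Rightarrow> 'h \<Rightarrow> real^'l::finite^'l
                    \<Rightarrow> ('k \<Rightarrow> 'l \<Rightarrow> 'b::real_algebra_1) \<Rightarrow> 'b" where
  "Jhat B v x Gam phi =
     (\<Sum>a\<in>UNIV. \<Sum>b\<in>UNIV. \<Sum>g\<in>UNIV. \<Sum>d\<in>UNIV.
        (Xmat B v x $ a $ b * Gam $ g $ d) *\<^sub>R (phi a g * phi b d))"

end

theory Submission
  imports Defs
begin

(* With phi_p = v^a (x) f_gamma for p = (a, gamma), the Clifford relations read
   phi_p phi_q + phi_q phi_p = Q_pq with Q = G (x) 1. For antisymmetric M, commutation with the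
   quadratic element J(M) = sum M_pq phi_p phi_q maps each generator phi_k to sum_p 2 (M Q)_pk phi_p;
   since commutation with J(M) is a derivation, [J(M), J(N)] = J(2 (M Q N - N Q M)).
   For M = X (x) Gamma and N = X' (x) Gamma' this is the quadratic element of
   2 (X G X' (x) Gamma Gamma' - X' G X (x) Gamma' Gamma), so the relations of k hold once the
   Gamma(alpha_i) commute or anticommute as the X_i do and the X(alpha) satisfy the stated identities.
   Those identities follow from the expansion
   X(alpha) G X(beta) = (alpha|beta)/4 alpha beta^T - (alpha alpha^T + beta beta^T)/8 + G^-1/16
   in coordinates. *)

lemma matrix_add_rdistrib: "((A::'a::semiring_1^'n^'m) + B) ** C = A ** C + B ** C"
  by (simp add: vec_eq_iff matrix_matrix_mult_def sum.distrib distrib_right)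

lemma matrix_diff_ldistrib: "(A::'a::ring_1^'n^'m) ** (B - C) = A ** B - A ** C"
  by (simp add: vec_eq_iff matrix_matrix_mult_def sum_subtractf right_diff_distrib)

lemma matrix_diff_rdistrib: "((A::'a::ring_1^'n^'m) - B) ** C = A ** C - B ** C"
  by (simp add: vec_eq_iff matrix_matrix_mult_def sum_subtractf left_diff_distrib)

lemma matrix_mul_uminus_left: "(- (A::'a::ring_1^'n^'m)) ** B = - (A ** B)"
  by (simp add: vec_eq_iff matrix_matrix_mult_def sum_negf)

lemma matrix_mul_uminus_right: "(A::'a::ring_1^'n^'m) ** (- B) = - (A ** B)"
  by (simp add: vec_eq_iff matrix_matrix_mult_def sum_negf)

lemma symmetric_inverse:
  fixes G :: "'a::comm_semiring_1^'n^'n"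
  assumes "G ** H = mat 1" and "H ** G = mat 1" and "transpose G = G"
  shows "transpose H = H"
proof -
  have "transpose H ** G = mat 1"
    using arg_cong[OF assms(1), of transpose] by (simp add: matrix_transpose_mul assms(3))
  then have "transpose H ** (G ** H) = H"
    by (simp add: matrix_mul_assoc)
  then show ?thesis
    by (simp add: assms(1))
qed

lemma sum_UNIV_prod: "(\<Sum>p\<in>UNIV. h p) = (\<Sum>a\<in>UNIV. \<Sum>b\<in>UNIV. h (a, b))"
  using sum.cartesian_product'[of h UNIV UNIV] by simp

section \<open>Kronecker products\<close>

definition kron :: "real^'n^'m \<Rightarrow> real^'q^'p \<Rightarrow> real^('n::finite \<times> 'q::finite)^('m \<times> 'p)" where
  "kron A B = (\<chi> p q. A $ fst p $ fst q * B $ snd p $ snd q)"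

lemma kron_mult: "kron A B ** kron C D = kron (A ** C) (B ** D)"
  by (simp add: vec_eq_iff kron_def matrix_matrix_mult_def sum_UNIV_prod sum_product mult_ac)

lemma transpose_kron: "transpose (kron A B) = kron (transpose A) (transpose B)"
  by (simp add: vec_eq_iff kron_def transpose_def)

lemma kron_add_left: "kron (A + A') B = kron A B + kron A' B"
  by (simp add: vec_eq_iff kron_def distrib_right)

lemma kron_scaleR_left: "kron (c *\<^sub>R A) B = c *\<^sub>R kron A B"
  by (simp add: vec_eq_iff kron_def)

lemma kron_uminus_right: "kron A (- B) = - kron A B"
  by (simp add: vec_eq_iff kron_def)

lemma kron_mat_1_right:
  "kron A (mat 1) $ p $ q = (if snd p = snd q then A $ fst p $ fst q else 0)"
  by (simp add: kron_def mat_def)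

section \<open>Quadratic elements of a Clifford algebra\<close>

definition quad :: "real^'i^'i \<Rightarrow> ('i::finite \<Rightarrow> 'b::real_algebra_1) \<Rightarrow> 'b" where
  "quad M f = (\<Sum>i\<in>UNIV. \<Sum>j\<in>UNIV. M $ i $ j *\<^sub>R (f i * f j))"

lemma quad_add: "quad (M + N) f = quad M f + quad N f"
  by (simp add: quad_def scaleR_add_left sum.distrib)

lemma quad_0 [simp]: "quad 0 f = 0"
  by (simp add: quad_def)

lemma quad_uminus: "quad (- M) f = - quad M f"
  by (simp add: quad_def sum_negf)

lemma comm_mult_right: "comm J (x * y) = comm J x * y + x * comm J y"
  by (simp add: comm_def algebra_simps)

lemma comm_quad_generator:
  fixes f :: "'i::finite \<Rightarrow> 'b::real_algebra_1"
  assumes rel: "\<And>i j. f i * f j + f j * f i = Q $ i $ j *\<^sub>R 1"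
    and anti: "transpose M = - M"
  shows "comm (quad M f) (f k) = (\<Sum>i\<in>UNIV. (2 * (M ** Q) $ i $ k) *\<^sub>R f i)"
proof -
  have comm_pair: "comm (f i * f j) (f k) = Q $ j $ k *\<^sub>R f i - Q $ i $ k *\<^sub>R f j" for i j
  proof -
    have "f i * f j * f k = Q $ j $ k *\<^sub>R f i - f i * f k * f j"
      using arg_cong[OF rel[of j k], of "\<lambda>z. f i * z"] by (simp add: algebra_simps)
    moreover have "f k * (f i * f j) = Q $ i $ k *\<^sub>R f j - f i * f k * f j"
      using arg_cong[OF rel[of i k], of "\<lambda>z. z * f j"] by (simp add: algebra_simps)
    ultimately show ?thesis by (simp add: comm_def)
  qed
  have M_anti: "M $ j $ i = - M $ i $ j" for i j
    using arg_cong[OF anti, of "\<lambda>A. A $ j $ i"] by (simp add: transpose_def)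
  have "comm (quad M f) (f k) = (\<Sum>i\<in>UNIV. \<Sum>j\<in>UNIV. M $ i $ j *\<^sub>R comm (f i * f j) (f k))"
    by (simp add: quad_def comm_def sum_distrib_left sum_distrib_right sum_subtractf
        scaleR_diff_right)
  also have "\<dots> = (\<Sum>i\<in>UNIV. \<Sum>j\<in>UNIV. (M $ i $ j * Q $ j $ k) *\<^sub>R f i)
                 - (\<Sum>j\<in>UNIV. \<Sum>i\<in>UNIV. (M $ i $ j * Q $ i $ k) *\<^sub>R f j)"
    by (simp add: comm_pair scaleR_diff_right sum_subtractf algebra_simps)
       (subst (2) sum.swap, simp)
  also have "(\<Sum>j\<in>UNIV. \<Sum>i\<in>UNIV. (M $ i $ j * Q $ i $ k) *\<^sub>R f j)
           = - (\<Sum>i\<in>UNIV. \<Sum>j\<in>UNIV. (M $ i $ j * Q $ j $ k) *\<^sub>R f i)"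
    by (subst M_anti) (simp add: sum_negf)
  also have "(\<Sum>i\<in>UNIV. \<Sum>j\<in>UNIV. (M $ i $ j * Q $ j $ k) *\<^sub>R f i)
      - - (\<Sum>i\<in>UNIV. \<Sum>j\<in>UNIV. (M $ i $ j * Q $ j $ k) *\<^sub>R f i)
      = (\<Sum>i\<in>UNIV. (2 * (\<Sum>j\<in>UNIV. M $ i $ j * Q $ j $ k)) *\<^sub>R f i)"
    by (simp only: diff_minus_eq_add mult_2 scaleR_add_left sum.distrib scaleR_sum_left)
  finally show ?thesis
    by (simp only: matrix_matrix_mult_def vec_lambda_beta)
qed

lemma comm_quad_of_derivation:
  fixes f :: "'i::finite \<Rightarrow> 'b::real_algebra_1"
  assumes D: "\<And>k. comm J (f k) = (\<Sum>i\<in>UNIV. P $ i $ k *\<^sub>R f i)"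
  shows "comm J (quad N f) = quad (P ** N + N ** transpose P) f"
proof -
  have "comm J (quad N f) = (\<Sum>k\<in>UNIV. \<Sum>l\<in>UNIV. N $ k $ l *\<^sub>R comm J (f k * f l))"
    by (simp add: quad_def comm_def sum_distrib_left sum_distrib_right sum_subtractf
        scaleR_diff_right)
  also have "\<dots> = (\<Sum>k\<in>UNIV. \<Sum>l\<in>UNIV. \<Sum>i\<in>UNIV. (P $ i $ k * N $ k $ l) *\<^sub>R (f i * f l))
      + (\<Sum>k\<in>UNIV. \<Sum>l\<in>UNIV. \<Sum>i\<in>UNIV. (N $ k $ l * P $ i $ l) *\<^sub>R (f k * f i))"
    by (simp add: comm_mult_right D sum_distrib_left sum_distrib_right scaleR_sum_right
        scaleR_add_right sum.distrib mult.commute)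
  also have "(\<Sum>k\<in>UNIV. \<Sum>l\<in>UNIV. \<Sum>i\<in>UNIV. (P $ i $ k * N $ k $ l) *\<^sub>R (f i * f l))
      = (\<Sum>i\<in>UNIV. \<Sum>l\<in>UNIV. (P ** N) $ i $ l *\<^sub>R (f i * f l))"
  proof -
    have "(\<Sum>k\<in>UNIV. \<Sum>l\<in>UNIV. \<Sum>i\<in>UNIV. (P $ i $ k * N $ k $ l) *\<^sub>R (f i * f l))
        = (\<Sum>i\<in>UNIV. \<Sum>l\<in>UNIV. \<Sum>k\<in>UNIV. (P $ i $ k * N $ k $ l) *\<^sub>R (f i * f l))"
      by (subst sum.swap, subst (1 2) sum.swap, rule refl)
    then show ?thesis by (simp add: matrix_matrix_mult_def scaleR_sum_left)
  qed
  also have "(\<Sum>k\<in>UNIV. \<Sum>l\<in>UNIV. \<Sum>i\<in>UNIV. (N $ k $ l * P $ i $ l) *\<^sub>R (f k * f i))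
      = (\<Sum>k\<in>UNIV. \<Sum>i\<in>UNIV. (N ** transpose P) $ k $ i *\<^sub>R (f k * f i))"
    by (rule sum.cong[OF refl], subst sum.swap)
       (simp add: matrix_matrix_mult_def transpose_def scaleR_sum_left)
  finally show ?thesis
    unfolding quad_add by (simp only: quad_def)
qed

lemma comm_quad_quad:
  fixes f :: "'i::finite \<Rightarrow> 'b::real_algebra_1"
  assumes rel: "\<And>i j. f i * f j + f j * f i = Q $ i $ j *\<^sub>R 1"
    and Q_sym: "transpose Q = Q" and M_anti: "transpose M = - M"
  shows "comm (quad M f) (quad N f) = quad (2 *\<^sub>R (M ** Q ** N - N ** Q ** M)) f"
proof -
  have "comm (quad M f) (quad N f)
      = quad ((2 *\<^sub>R (M ** Q)) ** N + N ** transpose (2 *\<^sub>R (M ** Q))) f"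
    by (rule comm_quad_of_derivation) (simp add: comm_quad_generator[OF rel M_anti])
  also have "transpose (2 *\<^sub>R (M ** Q)) = - (2 *\<^sub>R (Q ** M))"
    by (simp add: transpose_scalar matrix_transpose_mul Q_sym M_anti matrix_mul_uminus_right)
  finally show ?thesis
    by (simp add: scaleR_diff_right matrix_mul_uminus_right matrix_scalar_ac matrix_mul_assoc
        scalar_matrix_assoc[symmetric])
qed

lemma comm_quad_kron:
  fixes f :: "'k::finite \<times> 'l::finite \<Rightarrow> 'b::real_algebra_1"
  assumes rel: "\<And>p q. f p * f q + f q * f p = kron G (mat 1) $ p $ q *\<^sub>R 1"
    and G_sym: "transpose G = G" and X_sym: "transpose X = X" and Gam_anti: "transpose Gam = - Gam"
  shows "comm (quad (kron X Gam) f) (quad (kron Y Gam') f)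
    = quad (2 *\<^sub>R (kron (X ** G ** Y) (Gam ** Gam') - kron (Y ** G ** X) (Gam' ** Gam))) f"
proof -
  have "comm (quad (kron X Gam) f) (quad (kron Y Gam') f)
    = quad (2 *\<^sub>R (kron X Gam ** kron G (mat 1) ** kron Y Gam'
                      - kron Y Gam' ** kron G (mat 1) ** kron X Gam)) f"
    by (rule comm_quad_quad[OF rel])
       (simp_all add: transpose_kron G_sym X_sym Gam_anti kron_uminus_right)
  then show ?thesis by (simp add: kron_mult)
qed

lemma comm_quad_kron_eq_0:
  fixes f :: "'k::finite \<times> 'l::finite \<Rightarrow> 'b::real_algebra_1"
  assumes rel: "\<And>p q. f p * f q + f q * f p = kron G (mat 1) $ p $ q *\<^sub>R 1"
    and G_sym: "transpose G = G" and X_sym: "transpose X = X" and Gam_anti: "transpose Gam = - Gam"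
    and "X ** G ** Y = Y ** G ** X" and "Gam ** Gam' = Gam' ** Gam"
  shows "comm (quad (kron X Gam) f) (quad (kron Y Gam') f) = 0"
  using assms(5,6) by (simp add: comm_quad_kron[OF rel G_sym X_sym Gam_anti])

lemma comm_comm_quad_kron:
  fixes f :: "'k::finite \<times> 'l::finite \<Rightarrow> 'b::real_algebra_1"
  assumes rel: "\<And>p q. f p * f q + f q * f p = kron G (mat 1) $ p $ q *\<^sub>R 1"
    and G_sym: "transpose G = G" and X_sym: "transpose X = X" and Gam_anti: "transpose Gam = - Gam"
    and Gam_sq: "Gam ** Gam = - mat 1" and anticomm: "Gam' ** Gam = - (Gam ** Gam')"
    and XY: "X ** G ** Y + Y ** G ** X = (1/2) *\<^sub>R Z"
    and XZ: "X ** G ** Z + Z ** G ** X = (1/2) *\<^sub>R Y"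
  shows "comm (quad (kron X Gam) f) (comm (quad (kron X Gam) f) (quad (kron Y Gam') f))
    = - quad (kron Y Gam') f"
proof -
  let ?K = "Gam ** Gam'"
  have "comm (quad (kron X Gam) f) (quad (kron Y Gam') f)
      = quad (kron (2 *\<^sub>R (X ** G ** Y + Y ** G ** X)) ?K) f"
    by (simp add: comm_quad_kron[OF rel G_sym X_sym Gam_anti] anticomm kron_uminus_right
        kron_add_left kron_scaleR_left scaleR_add_right)
  also have "\<dots> = quad (kron Z ?K) f"
    by (simp add: XY)
  finally have inner: "comm (quad (kron X Gam) f) (quad (kron Y Gam') f) = quad (kron Z ?K) f" .
  have "Gam ** ?K = - Gam'"
    by (simp add: matrix_mul_assoc Gam_sq matrix_mul_uminus_left)
  moreover have "?K ** Gam = Gam'"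
    by (simp add: matrix_mul_assoc[symmetric] anticomm matrix_mul_uminus_right)
      (simp add: matrix_mul_assoc Gam_sq matrix_mul_uminus_left)
  ultimately have "comm (quad (kron X Gam) f) (quad (kron Z ?K) f)
      = quad (- kron (2 *\<^sub>R (X ** G ** Z + Z ** G ** X)) Gam') f"
    by (simp add: comm_quad_kron[OF rel G_sym X_sym Gam_anti] kron_uminus_right
        kron_add_left kron_scaleR_left scaleR_add_right scaleR_diff_right)
  also have "\<dots> = - quad (kron Y Gam') f"
    by (simp add: XZ quad_uminus)
  finally show ?thesis by (simp only: inner)
qed

section \<open>The matrices X(alpha)\<close>

lemma sum_scaleR_basis_unique:
  fixes v :: "'k::finite \<Rightarrow> 'h::real_vector"
  assumes indep: "independent (range v)" and inj: "inj v"
    and eq: "(\<Sum>a\<in>UNIV. c a *\<^sub>R v a) = (\<Sum>a\<in>UNIV. d a *\<^sub>R v a)"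
  shows "c = d"
proof -
  define u where "u w = c (inv v w) - d (inv v w)" for w
  have "(\<Sum>w\<in>range v. u w *\<^sub>R w) = (\<Sum>a\<in>UNIV. (c a - d a) *\<^sub>R v a)"
    by (simp add: sum.reindex[OF inj] u_def inv_f_f[OF inj])
  also have "\<dots> = 0"
    using eq by (simp add: scaleR_diff_left sum_subtractf)
  finally have "\<forall>w\<in>range v. u w = 0"
    using indep real_vector.dependent_finite[of "range v"] by auto
  then show ?thesis by (auto simp: u_def inv_f_f[OF inj])
qed

lemma coord_eqI:
  fixes v :: "'k::finite \<Rightarrow> 'h::real_vector"
  assumes "independent (range v)" and "inj v" and "x = (\<Sum>a\<in>UNIV. c a *\<^sub>R v a)"
  shows "coord v x = c"
  unfolding coord_def
proof (rule the_equality)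
  show "x = (\<Sum>a\<in>UNIV. c a *\<^sub>R v a)" by fact
  show "d = c" if "x = (\<Sum>a\<in>UNIV. d a *\<^sub>R v a)" for d
    using sum_scaleR_basis_unique[OF assms(1,2)] that assms(3) by metis
qed

definition outer :: "('m \<Rightarrow> real) \<Rightarrow> ('n \<Rightarrow> real) \<Rightarrow> real^'n::finite^'m::finite" where
  "outer p q = (\<chi> i j. p i * q j)"

lemma outer_mult_outer:
  "outer p q ** M ** outer r s = (\<Sum>c\<in>UNIV. \<Sum>d\<in>UNIV. q c * M $ c $ d * r d) *\<^sub>R outer p s"
  by (simp add: vec_eq_iff matrix_matrix_mult_def outer_def sum_distrib_left sum_distrib_right
      mult_ac, subst sum.swap, simp add: mult_ac)

locale nondegenerate_form_basis =
  fixes B :: "'h::real_vector \<Rightarrow> 'h \<Rightarrow> real" and v :: "'k::finite \<Rightarrow> 'h"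
  assumes independent: "independent (range v)" and inj: "inj v" and spanning: "span (range v) = UNIV"
    and bilinear: "bilinear B" and symmetric: "B x y = B y x"
    and nondegenerate: "(\<And>y. B x y = 0) \<Longrightarrow> x = 0"
begin

lemma coord_expansion: "x = (\<Sum>a\<in>UNIV. coord v x a *\<^sub>R v a)"
proof -
  have "x \<in> span (range v)" using spanning by simp
  then obtain u where "x = (\<Sum>w\<in>range v. u w *\<^sub>R w)"
    using real_vector.span_finite[of "range v"] by auto
  then have "x = (\<Sum>a\<in>UNIV. u (v a) *\<^sub>R v a)"
    by (simp add: sum.reindex[OF inj])
  then show ?thesis using coord_eqI[OF independent inj] by simp
qed

lemma coord_add: "coord v (x + y) = (\<lambda>a. coord v x a + coord v y a)"
  by (rule coord_eqI[OF independent inj])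
     (subst coord_expansion[of x], subst coord_expansion[of y], simp add: scaleR_add_left sum.distrib)

lemma coord_uminus: "coord v (- x) = (\<lambda>a. - coord v x a)"
  by (rule coord_eqI[OF independent inj]) (subst coord_expansion[of x], simp add: sum_negf)

lemma form_expansion: "B x y = (\<Sum>c\<in>UNIV. \<Sum>d\<in>UNIV. coord v x c * gram B v $ c $ d * coord v y d)"
proof -
  have "B x y = B (\<Sum>c\<in>UNIV. coord v x c *\<^sub>R v c) (\<Sum>d\<in>UNIV. coord v y d *\<^sub>R v d)"
    using coord_expansion by simp
  also have "\<dots> = (\<Sum>(c, d)\<in>UNIV \<times> UNIV. B (coord v x c *\<^sub>R v c) (coord v y d *\<^sub>R v d))"
    by (rule bilinear_sum[OF bilinear])
  finally show ?thesis
    by (simp add: sum_UNIV_prod bilinear_lmul[OF bilinear]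
        bilinear_rmul[OF bilinear] gram_def mult_ac)
qed

lemma gram_kernel:
  assumes "gram B v *v c = 0"
  shows "c = 0"
proof -
  define w where "w = (\<Sum>b\<in>UNIV. c $ b *\<^sub>R v b)"
  have coord_w: "coord v w = (\<lambda>b. c $ b)"
    using coord_eqI[OF independent inj w_def] .
  have "B y w = 0" for y
  proof -
    have "B y w = (\<Sum>a\<in>UNIV. coord v y a * (gram B v *v c) $ a)"
      by (simp add: form_expansion[of y w] coord_w matrix_vector_mult_def sum_distrib_left mult.assoc)
    then show ?thesis using assms by simp
  qed
  then have "w = 0"
    using nondegenerate symmetric by metis
  then have "(\<Sum>b\<in>UNIV. c $ b *\<^sub>R v b) = (\<Sum>b\<in>UNIV. 0 *\<^sub>R v b)"
    by (simp add: w_def)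
  then have "(\<lambda>b. c $ b) = (\<lambda>b. 0)"
    by (rule sum_scaleR_basis_unique[OF independent inj])
  then show ?thesis
    by (simp add: vec_eq_iff fun_eq_iff)
qed

lemma gram_inverse:
  "gram B v ** matrix_inv (gram B v) = mat 1" "matrix_inv (gram B v) ** gram B v = mat 1"
proof -
  have "invertible (gram B v)"
    using gram_kernel matrix_left_invertible_ker invertible_left_inverse by blast
  then have "\<exists>H. gram B v ** H = mat 1 \<and> H ** gram B v = mat 1"
    by (simp add: invertible_def)
  then have "gram B v ** matrix_inv (gram B v) = mat 1 \<and> matrix_inv (gram B v) ** gram B v = mat 1"
    unfolding matrix_inv_def by (rule someI_ex)
  then show "gram B v ** matrix_inv (gram B v) = mat 1" "matrix_inv (gram B v) ** gram B v = mat 1"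
    by auto
qed

lemma transpose_gram: "transpose (gram B v) = gram B v"
  by (simp add: vec_eq_iff transpose_def gram_def symmetric)

lemma transpose_inverse_gram: "transpose (matrix_inv (gram B v)) = matrix_inv (gram B v)"
  by (rule symmetric_inverse[OF gram_inverse transpose_gram])

lemma transpose_Xmat: "transpose (Xmat B v x) = Xmat B v x"
proof -
  have "matrix_inv (gram B v) $ j $ i = matrix_inv (gram B v) $ i $ j" for i j
    using arg_cong[OF transpose_inverse_gram, of "\<lambda>A. A $ i $ j"] by (simp add: transpose_def)
  then show ?thesis
    by (simp add: vec_eq_iff transpose_def Xmat_def mult.commute)
qed

lemma Xmat_uminus: "Xmat B v (- x) = Xmat B v x"
  by (simp add: vec_eq_iff Xmat_def coord_uminus)

lemma Xmat_eq_outer: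
  "Xmat B v x = (- 1/2) *\<^sub>R outer (coord v x) (coord v x) + (1/4) *\<^sub>R matrix_inv (gram B v)"
  by (simp add: vec_eq_iff Xmat_def outer_def)

lemma outer_gram_outer:
  "outer p (coord v x) ** gram B v ** outer (coord v y) q = B x y *\<^sub>R outer p q"
  by (simp add: outer_mult_outer form_expansion)

lemma Xmat_gram_Xmat:
  "Xmat B v x ** gram B v ** Xmat B v y
     = (B x y / 4) *\<^sub>R outer (coord v x) (coord v y) - (1/8) *\<^sub>R outer (coord v x) (coord v x)
       - (1/8) *\<^sub>R outer (coord v y) (coord v y) + (1/16) *\<^sub>R matrix_inv (gram B v)"
proof -
  have right_inv: "M ** gram B v ** matrix_inv (gram B v) = M" for M :: "real^'k^'k"
    by (simp add: matrix_mul_assoc[symmetric] gram_inverse)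
  show ?thesis
    unfolding Xmat_eq_outer matrix_add_ldistrib matrix_add_rdistrib matrix_scalar_ac
      scalar_matrix_assoc[symmetric] outer_gram_outer right_inv gram_inverse(2) matrix_mul_lid
    by (simp add: vec_eq_iff outer_def field_simps)
qed

lemma Xmat_commute:
  assumes "B x y = 0"
  shows "Xmat B v x ** gram B v ** Xmat B v y = Xmat B v y ** gram B v ** Xmat B v x"
  using assms symmetric[of x y] by (simp add: Xmat_gram_Xmat algebra_simps)

lemma Xmat_anticommute_add:
  assumes "B x y = -1"
  shows "Xmat B v x ** gram B v ** Xmat B v y + Xmat B v y ** gram B v ** Xmat B v x
    = (1/2) *\<^sub>R Xmat B v (x + y)"
  unfolding Xmat_gram_Xmat using assms symmetric[of x y]
  by (simp add: vec_eq_iff Xmat_def coord_add outer_def field_simps)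

lemma Xmat_anticommute_diff:
  assumes "B x y = 1"
  shows "Xmat B v x ** gram B v ** Xmat B v y + Xmat B v y ** gram B v ** Xmat B v x
    = (1/2) *\<^sub>R Xmat B v (x - y)"
proof -
  have "B x (- y) = -1"
    using assms by (simp add: bilinear_rneg[OF bilinear])
  from Xmat_anticommute_add[OF this] show ?thesis
    by (simp add: Xmat_uminus)
qed

end

section \<open>The representation of the compact subalgebra\<close>

lemma anticommute_of_square_and_serre:
  fixes a b :: "real^'l::finite^'l"
  assumes sq: "a ** a = - ((1/4) *\<^sub>R mat 1)"
    and serre: "a ** (a ** b - b ** a) - (a ** b - b ** a) ** a = - b"
  shows "b ** a = - (a ** b)"
proof -
  have left: "a ** a ** m = (- 1/4) *\<^sub>R m" for m :: "real^'l^'l"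
    by (simp add: sq matrix_mul_uminus_left scalar_matrix_assoc[symmetric])
  have right: "m ** a ** a = (- 1/4) *\<^sub>R m" for m :: "real^'l^'l"
    by (simp add: matrix_mul_assoc[symmetric] sq matrix_mul_uminus_right matrix_scalar_ac)
  have expanded: "(- 1/4) *\<^sub>R b - a ** b ** a - (a ** b ** a - (- 1/4) *\<^sub>R b) = - b"
    using serre by (simp only: matrix_diff_ldistrib matrix_diff_rdistrib matrix_mul_assoc left right)
  have "(a ** b ** a) $ i $ j = ((1/4) *\<^sub>R b) $ i $ j" for i j
    using arg_cong[OF expanded, of "\<lambda>M. M $ i $ j"] by simp
  then have aba: "a ** b ** a = (1/4) *\<^sub>R b"
    by (simp add: vec_eq_iff)
  have "(- 1/4) *\<^sub>R (b ** a) = a ** (a ** b ** a)"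
    by (simp add: matrix_mul_assoc left scalar_matrix_assoc[symmetric] matrix_mul_uminus_left)
  also have "\<dots> = (1/4) *\<^sub>R (a ** b)"
    by (simp add: aba matrix_scalar_ac scalar_matrix_assoc)
  finally have "(- 1/4) *\<^sub>R (b ** a) = (1/4) *\<^sub>R (a ** b)" .
  then show ?thesis
    by (simp add: vec_eq_iff) (metis minus_equation_iff)
qed

lemma Jhat_eq_quad_kron:
  "Jhat B v x Gam phi = quad (kron (Xmat B v x) Gam) (\<lambda>p. phi (fst p) (snd p))"
  unfolding Jhat_def quad_def kron_def sum_UNIV_prod
  by (simp, rule sum.cong[OF refl], rule sum.swap)

lemma clifford_relations_kron_gram:
  assumes "\<forall>a b g d. phi a g * phi b d + phi b d * phi a g
             = (if g = d then B (v a) (v b) else 0) *\<^sub>R (1 :: 'b::real_algebra_1)"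
  shows "phi (fst p) (snd p) * phi (fst q) (snd q) + phi (fst q) (snd q) * phi (fst p) (snd p)
    = kron (gram B v) (mat 1) $ p $ q *\<^sub>R 1"
  using assms by (simp add: kron_mat_1_right gram_def)

context nondegenerate_form_basis
begin

lemma comm_Jhat_eq_0:
  assumes rel: "\<forall>a b g d. phi a g * phi b d + phi b d * phi a g
             = (if g = d then B (v a) (v b) else 0) *\<^sub>R (1 :: 'b::real_algebra_1)"
    and "B x y = 0" and "transpose Gam = - Gam" and "Gam ** Gam' = Gam' ** Gam"
  shows "comm (Jhat B v x Gam phi) (Jhat B v y Gam' phi) = 0"
  unfolding Jhat_eq_quad_kron
  by (rule comm_quad_kron_eq_0[OF clifford_relations_kron_gram[where B = B and v = v, OF rel]
      transpose_gram transpose_Xmat]) (use assms Xmat_commute in auto)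

lemma comm_comm_Jhat:
  assumes rel: "\<forall>a b g d. phi a g * phi b d + phi b d * phi a g
             = (if g = d then B (v a) (v b) else 0) *\<^sub>R (1 :: 'b::real_algebra_1)"
    and Bxy: "B x y = -1" and Bxx: "B x x = 2"
    and "transpose Gam = - Gam" and "Gam ** Gam = - mat 1" and "Gam' ** Gam = - (Gam ** Gam')"
  shows "comm (Jhat B v x Gam phi) (comm (Jhat B v x Gam phi) (Jhat B v y Gam' phi))
    = - Jhat B v y Gam' phi"
proof -
  have "B x (x + y) = 1"
    using Bxy Bxx by (simp add: bilinear_radd[OF bilinear])
  from Xmat_anticommute_diff[OF this]
  have "Xmat B v x ** gram B v ** Xmat B v (x + y) + Xmat B v (x + y) ** gram B v ** Xmat B v x
      = (1/2) *\<^sub>R Xmat B v y"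
    by (simp add: Xmat_uminus)
  then show ?thesis
    unfolding Jhat_eq_quad_kron
    by (intro comm_comm_quad_kron[OF clifford_relations_kron_gram[where B = B and v = v, OF rel]
        transpose_gram transpose_Xmat]) (use assms Xmat_anticommute_add[OF Bxy] in auto)
qed

end

theorem proposition5p1:
  fixes A :: "'n::finite \<Rightarrow> 'n \<Rightarrow> int"
    and al :: "'n \<Rightarrow> 'h::euclidean_space"
    and B :: "'h \<Rightarrow> 'h \<Rightarrow> real"
    and v :: "'k::finite \<Rightarrow> 'h"
    and rho :: "'n \<Rightarrow> real^'l::finite^'l"
  assumes gcm: "simply_laced_symmetrizable_gcm A"
    and dim_h: "DIM('h) = 2 * CARD('n) - rank (cartan_matrix A)"
    and roots_indep: "independent (range al)" and roots_inj: "inj al"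
    and B_bil: "bilinear B"
    and B_sym: "\<forall>x y. B x y = B y x"
    and B_nondeg: "\<forall>x. (\<forall>y. B x y = 0) \<longrightarrow> x = 0"
    and B_roots: "\<forall>i j. B (al i) (al j) = real_of_int (A i j)"
    and v_basis: "independent (range v)" "inj v" "span (range v) = UNIV"
    and rho_spin: "\<forall>i. rho i ** rho i = - ((1/4) *\<^sub>R mat 1)"
    and rho_antisym: "\<forall>i. transpose (rho i) = - rho i"
    and rho_rel1: "\<forall>i j. A i j = -1 \<longrightarrow>
                     rho i ** (rho i ** rho j - rho j ** rho i) - (rho i ** rho j - rho j ** rho i) ** rho i
                       = - rho j"
    and rho_rel0: "\<forall>i j. A i j = 0 \<longrightarrow> rho i ** rho j - rho j ** rho i = 0"
  shows
    "(\<forall>x\<in>lam_set A al. transpose (Xmat B v x) = Xmat B v x)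
     \<and> (\<forall>x\<in>lam_set A al. \<forall>y\<in>lam_set A al. B x y = 0 \<longrightarrow>
          Xmat B v x ** gram B v ** Xmat B v y - Xmat B v y ** gram B v ** Xmat B v x = 0)
     \<and> (\<forall>x\<in>lam_set A al. \<forall>y\<in>lam_set A al. B x y = -1 \<longrightarrow> x + y \<in> lam_set A al \<longrightarrow>
          Xmat B v x ** gram B v ** Xmat B v y + Xmat B v y ** gram B v ** Xmat B v x
            = (1/2) *\<^sub>R Xmat B v (x + y))
     \<and> (\<forall>x\<in>lam_set A al. \<forall>y\<in>lam_set A al. B x y = 1 \<longrightarrow> x - y \<in> lam_set A al \<longrightarrow>
          Xmat B v x ** gram B v ** Xmat B v y + Xmat B v y ** gram B v ** Xmat B v x
            = (1/2) *\<^sub>R Xmat B v (x - y))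
     \<and> (\<forall>(phi :: 'k \<Rightarrow> 'l \<Rightarrow> 'b::real_algebra_1).
          (\<forall>a b g d. phi a g * phi b d + phi b d * phi a g
                       = (if g = d then B (v a) (v b) else 0) *\<^sub>R 1) \<longrightarrow>
          (\<forall>i j. A i j = -1 \<longrightarrow>
             comm (Jhat B v (al i) (2 *\<^sub>R rho i) phi)
                  (comm (Jhat B v (al i) (2 *\<^sub>R rho i) phi) (Jhat B v (al j) (2 *\<^sub>R rho j) phi))
             = - Jhat B v (al j) (2 *\<^sub>R rho j) phi)
          \<and> (\<forall>i j. A i j = 0 \<longrightarrow>
             comm (Jhat B v (al i) (2 *\<^sub>R rho i) phi) (Jhat B v (al j) (2 *\<^sub>R rho j) phi) = 0))"
proof -
  interpret nondegenerate_form_basis B v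
    using v_basis B_bil B_sym B_nondeg by unfold_locales auto
  have Gam_anti: "transpose (2 *\<^sub>R rho i) = - (2 *\<^sub>R rho i)" for i
    using rho_antisym by (simp add: transpose_scalar)
  have Gam_mult: "(2 *\<^sub>R rho i) ** (2 *\<^sub>R rho j) = 4 *\<^sub>R (rho i ** rho j)" for i j
    by (simp add: matrix_scalar_ac scalar_matrix_assoc[symmetric])
  have B_edge: "B (al i) (al j) = -1" "B (al i) (al i) = 2" if "A i j = -1" for i j
    using that B_roots gcm by (simp_all add: simply_laced_symmetrizable_gcm_def)
  show ?thesis
  proof (intro conjI ballI allI impI)
    fix phi :: "'k \<Rightarrow> 'l \<Rightarrow> 'b" and i j
    assume rel: "\<forall>a b g d. phi a g * phi b d + phi b d * phi a g
                   = (if g = d then B (v a) (v b) else 0) *\<^sub>R 1"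
    { assume "A i j = -1"
      then show "comm (Jhat B v (al i) (2 *\<^sub>R rho i) phi)
          (comm (Jhat B v (al i) (2 *\<^sub>R rho i) phi) (Jhat B v (al j) (2 *\<^sub>R rho j) phi))
        = - Jhat B v (al j) (2 *\<^sub>R rho j) phi"
        using comm_comm_Jhat[OF rel B_edge Gam_anti] rho_spin rho_rel1
          anticommute_of_square_and_serre[of "rho i" "rho j"]
        by (simp add: Gam_mult) }
    { assume "A i j = 0"
      then have "B (al i) (al j) = 0"
        and "(2 *\<^sub>R rho i) ** (2 *\<^sub>R rho j) = (2 *\<^sub>R rho j) ** (2 *\<^sub>R rho i)"
        using B_roots rho_rel0[rule_format, of i j] by (simp_all add: Gam_mult)
      then show "comm (Jhat B v (al i) (2 *\<^sub>R rho i) phi) (Jhat B v (al j) (2 *\<^sub>R rho j) phi) = 0"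
        by (rule comm_Jhat_eq_0[OF rel _ Gam_anti]) }
  qed (auto simp: transpose_Xmat Xmat_anticommute_add Xmat_anticommute_diff intro: Xmat_commute)
qed

end
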